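(* Let $(\mathcal A,\varphi,\mathcal F,\Phi)$ be a ncps of type B$'$ with associated infinitesimal ncps $(\mathcal B,\varphi,\varphi')$. Let $(\mathcal A_i)_{i\in I}$ be subalgebras of $\mathcal A$ containing $1_{\mathcal A}$ and $(\mathcal F_i)_{i\in I}$ subalgebras of $\mathcal F$, indexed by the same set $I$. Let $\mathcal B_i$ be the subalgebra of $\mathcal B$ generated by $\mathcal A_i\oplus\{0_{\mathcal F}\}$ and $\mathbb C1_{\mathcal A}\oplus\mathcal F_i$. If $(\mathcal A_i,\mathcal F_i)_{i\in I}$ is B$'$-free in $(\mathcal A,\varphi,\mathcal F,\Phi)$, then $(\mathcal B_i)_{i\in I}$ are infinitesimally free in $(\mathcal B,\varphi,\varphi')$.
   Context: Ncps of type B$'$ $(\mathcal A,\varphi,\mathcal F,\Phi)$: $\mathcal A$ unital complex algebra, $\varphi(1_{\mathcal A})=1$, $\mathcal F$ an algebra which is an $\mathcal A$-bimodule compatible with its multiplication, $\Phi:\mathcal F\to\mathbb C$ linear. $\mathcal B=\mathcal A\oplus\mathcal F$ with product $(a_1,f_1)(a_2,f_2)=(a_1a_2,a_1f_2+f_1a_2+f_1f_2)$, unit $1_{\mathcal A}$; $\varphi(a+f):=\varphi(a)$, $\varphi'(a+f):=\Phi(f)$. $(\mathcal A_i,\mathcal F_i)_{i\in I}$ is B$'$-free if: $(\mathcal A_i)$ are free w.r.t. $\varphi$ ($\varphi(c_1\cdots c_n)=0$ for alternating indices and centered $c_l\in\mathcal A_{i_l}$); with $\mathcal A_0$ the algebra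 generated by all $\mathcal A_i$ and $\mathcal F_0$ the algebra generated by all $\mathcal F_i$, $\Phi(c_0g_1c_1\cdots c_{n-1}g_nc_n)=\varphi(c_0c_n)\prod_{l=1}^{n-1}\varphi(c_l)\Phi(g_1\cdots g_n)$ for $c_l\in\mathcal A_0,g_l\in\mathcal F_0$; and $\Phi(g_1\cdots g_n)=0$ whenever $n\ge2$, $i_1\ne\cdots\ne i_n$, $g_l\in\mathcal F_{i_l}$. Infinitesimal freeness of unital subalgebras $(\mathcal B_i)$: for $i_1\ne\cdots\ne i_n$ and $b_l\in\mathcal B_{i_l}$ with $\varphi(b_l)=0$, $\varphi(b_1\cdots b_n)=0$ and $\varphi'(b_1\cdots b_n)=\varphi(b_1b_n)\varphi(b_2b_{n-1})\cdots\varphi(b_{(n-1)/2}b_{(n+3)/2})\varphi'(b_{(n+1)/2})$ if $n$ odd and $i_1=i_n,i_2=i_{n-1},\dots$, and $0$ otherwise. *)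

theory Defs
  imports Complex_Main
begin

text \<open>
  Noncommutative probability space of type B':
  A is modelled by a type 'a of class ring_1 (unital ring) with an explicit
  complex scalar multiplication smA; F by a type 'f of class ring (associative,
  not necessarily unital) with complex scalar multiplication smF; the
  A-bimodule structure on F is given by the left action lA and right action rA.
\<close>

definition cvs :: "(complex \<Rightarrow> 'v::ab_group_add \<Rightarrow> 'v) \<Rightarrow> bool" where
  "cvs sm \<longleftrightarrow>
     (\<forall>c x y. sm c (x + y) = sm c x + sm c y) \<and>
     (\<forall>c d x. sm (c + d) x = sm c x + sm d x) \<and>
     (\<forall>c d x. sm (c * d) x = sm c (sm d x)) \<and>
     (\<forall>x. sm 1 x = x)"

definition calg :: "(complex \<Rightarrow> 'v::ring \<Rightarrow> 'v) \<Rightarrow> bool" where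
  "calg sm \<longleftrightarrow> cvs sm \<and>
     (\<forall>c x y. sm c (x * y) = sm c x * y \<and> sm c (x * y) = x * sm c y)"

definition clinear_fun :: "(complex \<Rightarrow> 'v::ab_group_add \<Rightarrow> 'v) \<Rightarrow> ('v \<Rightarrow> complex) \<Rightarrow> bool" where
  "clinear_fun sm h \<longleftrightarrow> (\<forall>x y. h (x + y) = h x + h y) \<and> (\<forall>c x. h (sm c x) = c * h x)"

definition ncpsB' ::
  "(complex \<Rightarrow> 'a::ring_1 \<Rightarrow> 'a) \<Rightarrow> ('a \<Rightarrow> complex) \<Rightarrow>
   (complex \<Rightarrow> 'f::ring \<Rightarrow> 'f) \<Rightarrow> ('a \<Rightarrow> 'f \<Rightarrow> 'f) \<Rightarrow> ('f \<Rightarrow> 'a \<Rightarrow> 'f) \<Rightarrow>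
   ('f \<Rightarrow> complex) \<Rightarrow> bool" where
  "ncpsB' smA \<phi> smF lA rA \<Phi> \<longleftrightarrow>
     calg smA \<and> clinear_fun smA \<phi> \<and> \<phi> 1 = 1 \<and>
     calg smF \<and> clinear_fun smF \<Phi> \<and>
     \<comment> \<open>A-bimodule structure on F (complex bilinear)\<close>
     (\<forall>a b f. lA (a + b) f = lA a f + lA b f) \<and>
     (\<forall>a f g. lA a (f + g) = lA a f + lA a g) \<and>
     (\<forall>a f g. rA (f + g) a = rA f a + rA g a) \<and>
     (\<forall>a b f. rA f (a + b) = rA f a + rA f b) \<and>
     (\<forall>c a f. lA (smA c a) f = smF c (lA a f) \<and> lA a (smF c f) = smF c (lA a f)) \<and>
     (\<forall>c a f. rA f (smA c a) = smF c (rA f a) \<and> rA (smF c f) a = smF c (rA f a)) \<and>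
     (\<forall>a b f. lA (a * b) f = lA a (lA b f)) \<and>
     (\<forall>a b f. rA f (a * b) = rA (rA f a) b) \<and>
     (\<forall>f. lA 1 f = f \<and> rA f 1 = f) \<and>
     (\<forall>a b f. lA a (rA f b) = rA (lA a f) b) \<and>
     \<comment> \<open>compatibility with the multiplication of F\<close>
     (\<forall>a f g. lA a (f * g) = lA a f * g) \<and>
     (\<forall>a f g. rA (f * g) a = f * rA g a) \<and>
     (\<forall>a f g. rA f a * g = f * lA a g)"

text \<open>The algebra B = A \<oplus> F, elements as pairs (a, f).\<close>

definition bmul :: "('a::ring_1 \<Rightarrow> 'f::ring \<Rightarrow> 'f) \<Rightarrow> ('f \<Rightarrow> 'a \<Rightarrow> 'f) \<Rightarrow>
    'a \<times> 'f \<Rightarrow> 'a \<times> 'f \<Rightarrow> 'a \<times> 'f" where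
  "bmul lA rA x y = (fst x * fst y, lA (fst x) (snd y) + rA (snd x) (fst y) + snd x * snd y)"

definition bprod :: "('a::ring_1 \<Rightarrow> 'f::ring \<Rightarrow> 'f) \<Rightarrow> ('f \<Rightarrow> 'a \<Rightarrow> 'f) \<Rightarrow>
    ('a \<times> 'f) list \<Rightarrow> 'a \<times> 'f" where
  "bprod lA rA xs = foldr (bmul lA rA) xs (1, 0)"

definition badd :: "'a::plus \<times> 'f::plus \<Rightarrow> 'a \<times> 'f \<Rightarrow> 'a \<times> 'f" where
  "badd x y = (fst x + fst y, snd x + snd y)"

definition bsm :: "(complex \<Rightarrow> 'a \<Rightarrow> 'a) \<Rightarrow> (complex \<Rightarrow> 'f \<Rightarrow> 'f) \<Rightarrow> complex \<Rightarrow> 'a \<times> 'f \<Rightarrow> 'a \<times> 'f" where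
  "bsm smA smF c x = (smA c (fst x), smF c (snd x))"

text \<open>product of a nonempty list in the (possibly non-unital) algebra F\<close>
fun fprod :: "'f::ring list \<Rightarrow> 'f" where
  "fprod [] = 0"
| "fprod [x] = x"
| "fprod (x # y # xs) = x * fprod (y # xs)"

definition subalg :: "(complex \<Rightarrow> 'v::{plus,times,zero} \<Rightarrow> 'v) \<Rightarrow> 'v set \<Rightarrow> bool" where
  "subalg sm S \<longleftrightarrow> 0 \<in> S \<and> (\<forall>x\<in>S. \<forall>y\<in>S. x + y \<in> S \<and> x * y \<in> S) \<and> (\<forall>c. \<forall>x\<in>S. sm c x \<in> S)"

definition gen_alg :: "(complex \<Rightarrow> 'v::{plus,times,zero} \<Rightarrow> 'v) \<Rightarrow> 'v set \<Rightarrow> 'v set" where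
  "gen_alg sm S = \<Inter>{T. subalg sm T \<and> S \<subseteq> T}"

definition subalgB :: "(complex \<Rightarrow> 'a::ring_1 \<Rightarrow> 'a) \<Rightarrow> (complex \<Rightarrow> 'f::ring \<Rightarrow> 'f) \<Rightarrow>
    ('a \<Rightarrow> 'f \<Rightarrow> 'f) \<Rightarrow> ('f \<Rightarrow> 'a \<Rightarrow> 'f) \<Rightarrow> ('a \<times> 'f) set \<Rightarrow> bool" where
  "subalgB smA smF lA rA S \<longleftrightarrow> (0, 0) \<in> S \<and>
     (\<forall>x\<in>S. \<forall>y\<in>S. badd x y \<in> S \<and> bmul lA rA x y \<in> S) \<and> (\<forall>c. \<forall>x\<in>S. bsm smA smF c x \<in> S)"

definition gen_algB :: "(complex \<Rightarrow> 'a::ring_1 \<Rightarrow> 'a) \<Rightarrow> (complex \<Rightarrow> 'f::ring \<Rightarrow> 'f) \<Rightarrow>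
    ('a \<Rightarrow> 'f \<Rightarrow> 'f) \<Rightarrow> ('f \<Rightarrow> 'a \<Rightarrow> 'f) \<Rightarrow> ('a \<times> 'f) set \<Rightarrow> ('a \<times> 'f) set" where
  "gen_algB smA smF lA rA S = \<Inter>{T. subalgB smA smF lA rA T \<and> S \<subseteq> T}"

definition Bsub :: "(complex \<Rightarrow> 'a::ring_1 \<Rightarrow> 'a) \<Rightarrow> (complex \<Rightarrow> 'f::ring \<Rightarrow> 'f) \<Rightarrow>
    ('a \<Rightarrow> 'f \<Rightarrow> 'f) \<Rightarrow> ('f \<Rightarrow> 'a \<Rightarrow> 'f) \<Rightarrow> 'a set \<Rightarrow> 'f set \<Rightarrow> ('a \<times> 'f) set" where
  "Bsub smA smF lA rA Ai Fi = gen_algB smA smF lA rA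
     ((\<lambda>a. (a, 0)) ` Ai \<union> {(smA c 1, f) | c f. f \<in> Fi})"

text \<open>c_0 g_1 c_1 ... g_n c_n as a list of elements of B\<close>
definition interleave :: "'a list \<Rightarrow> 'f list \<Rightarrow> ('a::zero \<times> 'f::zero) list" where
  "interleave cs gs = concat (map2 (\<lambda>c g. [(c, 0), (0, g)]) (butlast cs) gs) @ [(last cs, 0)]"

definition Bprime_free ::
  "(complex \<Rightarrow> 'a::ring_1 \<Rightarrow> 'a) \<Rightarrow> ('a \<Rightarrow> complex) \<Rightarrow>
   (complex \<Rightarrow> 'f::ring \<Rightarrow> 'f) \<Rightarrow> ('a \<Rightarrow> 'f \<Rightarrow> 'f) \<Rightarrow> ('f \<Rightarrow> 'a \<Rightarrow> 'f) \<Rightarrow>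
   ('f \<Rightarrow> complex) \<Rightarrow> 'i set \<Rightarrow> ('i \<Rightarrow> 'a set) \<Rightarrow> ('i \<Rightarrow> 'f set) \<Rightarrow> bool" where
  "Bprime_free smA \<phi> smF lA rA \<Phi> I As Fs \<longleftrightarrow>
     \<comment> \<open>(A_i) free w.r.t. phi\<close>
     (\<forall>cs :: ('i \<times> 'a) list. cs \<noteq> [] \<longrightarrow> successively (\<noteq>) (map fst cs) \<longrightarrow>
        (\<forall>(j, c) \<in> set cs. j \<in> I \<and> c \<in> As j \<and> \<phi> c = 0) \<longrightarrow>
        \<phi> (prod_list (map snd cs)) = 0) \<and>
     \<comment> \<open>factorisation of Phi over A_0 and F_0\<close>
     (let A0 = gen_alg smA (\<Union>j\<in>I. As j); F0 = gen_alg smF (\<Union>j\<in>I. Fs j) in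
      \<forall>cs gs. gs \<noteq> [] \<longrightarrow> length cs = length gs + 1 \<longrightarrow> set cs \<subseteq> A0 \<longrightarrow> set gs \<subseteq> F0 \<longrightarrow>
        \<Phi> (snd (bprod lA rA (interleave cs gs))) =
          \<phi> (hd cs * last cs) * (\<Prod>l\<in>{1..<length gs}. \<phi> (cs ! l)) * \<Phi> (fprod gs)) \<and>
     \<comment> \<open>vanishing of alternating products in the F_i\<close>
     (\<forall>gs :: ('i \<times> 'f) list. length gs \<ge> 2 \<longrightarrow> successively (\<noteq>) (map fst gs) \<longrightarrow>
        (\<forall>(j, g) \<in> set gs. j \<in> I \<and> g \<in> Fs j) \<longrightarrow>
        \<Phi> (fprod (map snd gs)) = 0)"

definition inf_free ::
  "(('a \<times> 'f) \<Rightarrow> ('a \<times> 'f) \<Rightarrow> ('a \<times> 'f)) \<Rightarrow> ('a \<times> 'f) \<Rightarrow>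
   (('a \<times> 'f) \<Rightarrow> complex) \<Rightarrow> (('a \<times> 'f) \<Rightarrow> complex) \<Rightarrow>
   'i set \<Rightarrow> ('i \<Rightarrow> ('a \<times> 'f) set) \<Rightarrow> bool" where
  "inf_free mul one \<psi> \<psi>' I Bs \<longleftrightarrow>
     (\<forall>bs :: ('i \<times> ('a \<times> 'f)) list. bs \<noteq> [] \<longrightarrow> successively (\<noteq>) (map fst bs) \<longrightarrow>
        (\<forall>(j, b) \<in> set bs. j \<in> I \<and> b \<in> Bs j \<and> \<psi> b = 0) \<longrightarrow>
        (let n = length bs; x = map snd bs; p = foldr mul x one in
         \<psi> p = 0 \<and>
         \<psi>' p = (if odd n \<and> rev (map fst bs) = map fst bs
                 then (\<Prod>l<(n - 1) div 2. \<psi> (mul (x ! l) (x ! (n - 1 - l)))) * \<psi>' (x ! (n div 2))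
                 else 0)))"

end

theory Submission
  imports Defs "HOL-Library.Product_Plus"
begin

text \<open>Write elements of \<open>B\<close> as pairs \<open>(a, f)\<close>, so that \<open>\<phi>\<close> and \<open>\<phi>'\<close> become \<open>\<phi> a\<close>
  and \<open>\<Phi> f\<close>. Every element of \<open>B\<^sub>i\<close> is \<open>(a, 0) + t\<close> with \<open>a \<in> A\<^sub>i\<close> and \<open>t\<close> a sum of
  words \<open>c\<^sub>0 g\<^sub>1 c\<^sub>1 \<cdots> g\<^sub>m c\<^sub>m\<close> (\<open>m \<ge> 1\<close>) with letters from \<open>A\<^sub>i\<close> and \<open>F\<^sub>i\<close>.
  For centered alternating \<open>b\<^sub>1, \<dots>, b\<^sub>n\<close> the A-part of the product is \<open>a\<^sub>1 \<cdots> a\<^sub>n\<close>,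
  which freeness of the \<open>A\<^sub>i\<close> kills. The F-part is additive in each factor, so each factor
  may be taken to be a centered letter of some \<open>A\<^sub>i\<close> or a single word. Two words kill \<open>\<Phi>\<close>
  through its factorisation: either F-letters of two indices occur, and grouping them gives an
  alternating product in the \<open>F\<^sub>i\<close>, or two words of equal index are separated by a centered
  alternating product. A single word gives the Leibniz rule: \<open>\<phi>'(b\<^sub>1 \<cdots> b\<^sub>n)\<close> is the sum over
  \<open>k\<close> of \<open>\<phi>'(b\<^sub>k)\<close> times the moment of the product with \<open>b\<^sub>k\<close> omitted. By freeness of the
  \<open>A\<^sub>i\<close> that moment vanishes unless the index sequence is a palindrome with middle \<open>k\<close>, where
  it is the product of the \<open>\<phi>(b\<^sub>l b\<^sub>n\<^sub>+\<^sub>1\<^sub>-\<^sub>l)\<close>.\<close>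

lemma cvs_zero_scalar: "cvs sm \<Longrightarrow> sm 0 x = 0"
  unfolding cvs_def by (metis add_0 add_left_imp_eq add_0_right)

lemma cvs_zero_vector: "cvs sm \<Longrightarrow> sm c 0 = 0"
  unfolding cvs_def by (metis add_0 add_left_imp_eq add_0_right)

lemma cvs_minus_one: "cvs sm \<Longrightarrow> sm (-1) x = - x"
  using cvs_zero_scalar[of sm x] unfolding cvs_def
  by (metis add.right_inverse neg_eq_iff_add_eq_0)

lemma clinear_fun_zero: "clinear_fun sm h \<Longrightarrow> h 0 = 0"
  unfolding clinear_fun_def by (metis add_0 add_left_imp_eq add_0_right)

lemma clinear_fun_diff: "clinear_fun sm h \<Longrightarrow> h (x - y) = h x - h y"
  unfolding clinear_fun_def by (metis eq_diff_eq)

lemma subalg_diff: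
  assumes "cvs sm" "subalg sm S" "x \<in> S" "y \<in> S"
  shows "x - y \<in> S"
proof -
  have "x + sm (-1) y \<in> S" using assms(2-4) unfolding subalg_def by blast
  then show ?thesis using cvs_minus_one[OF assms(1)] by simp
qed

lemma sum_list_concat: "sum_list (concat xss) = sum_list (map sum_list xss)"
  by (induction xss) simp_all

lemma fprod_merge_adjacent: "fprod (xs @ [g, h] @ ys) = fprod (xs @ [g * h] @ ys)"
proof (induction xs)
  case Nil
  then show ?case by (cases ys) (auto simp: mult.assoc)
next
  case (Cons x xs)
  then show ?case by (cases xs) auto
qed

lemma not_successively_obtain:
  assumes "\<not> successively P l"
  obtains xs a b ys where "l = xs @ [a, b] @ ys" "\<not> P a b"
  using assms
proof (induction l arbitrary: thesis rule: induct_list012)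
  case (3 x y l)
  show ?case
  proof (cases "P x y")
    case True
    with "3.prems"(2) have "\<not> successively P (y # l)" by simp
    then obtain xs a b ys where "y # l = xs @ [a, b] @ ys" "\<not> P a b" using "3.IH"(2) by blast
    then show ?thesis using "3.prems"(1)[of "x # xs"] by simp
  next
    case False
    then show ?thesis using "3.prems"(1)[of "[]"] by simp
  qed
qed simp_all

lemma rev_take_eq_drop_Suc_iff:
  assumes "k < length t"
  shows "rev (take k t) = drop (Suc k) t \<longleftrightarrow> odd (length t) \<and> rev t = t \<and> k = length t div 2"
proof -
  have t: "t = take k t @ t ! k # drop (Suc k) t" using assms by (simp add: id_take_nth_drop)
  have rev_t: "rev t = rev (drop (Suc k) t) @ t ! k # rev (take k t)" by (subst t) simp
  show ?thesis
  proof
    assume c: "rev (take k t) = drop (Suc k) t"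
    have "k = length t - Suc k" using arg_cong[OF c, of length] assms by simp
    then have "length t = Suc (2 * k)" using assms by arith
    moreover have "rev t = t"
    proof -
      have "rev (drop (Suc k) t) = take k t" using arg_cong[OF c, of rev] by simp
      then have "rev t = take k t @ t ! k # drop (Suc k) t" using rev_t unfolding c by simp
      also have "\<dots> = t" by (rule t[symmetric])
      finally show ?thesis .
    qed
    ultimately show "odd (length t) \<and> rev t = t \<and> k = length t div 2" by simp
  next
    assume a: "odd (length t) \<and> rev t = t \<and> k = length t div 2"
    then have "length t = Suc (2 * k)" using odd_two_times_div_two_succ[of "length t"] by simp
    then have "length (rev (drop (Suc k) t)) = length (take k t)" by simp
    moreover have "rev (drop (Suc k) t) @ t ! k # rev (take k t) = take k t @ t ! k # drop (Suc k) t"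
      using rev_t a t by simp
    ultimately show "rev (take k t) = drop (Suc k) t" by simp
  qed
qed

lemma additive_at_sum_list:
  fixes L :: "'v::comm_monoid_add list \<Rightarrow> 'c::cancel_comm_monoid_add"
  assumes add: "\<And>x y. L (pre @ (x + y) # post) = L (pre @ x # post) + L (pre @ y # post)"
  shows "L (pre @ sum_list xs # post) = (\<Sum>x\<leftarrow>xs. L (pre @ x # post))"
proof (induction xs)
  case Nil
  have "L (pre @ 0 # post) + L (pre @ 0 # post) = L (pre @ 0 # post) + 0"
    using add[of 0 0] by simp
  then show ?case by simp
next
  case (Cons x xs)
  then show ?case by (simp add: add)
qed

lemma multiadditive_eq_on_sums:
  fixes L R :: "'v::comm_monoid_add list \<Rightarrow> 'c::cancel_comm_monoid_add"
  assumes L_add: "\<And>pre x y post. L (pre @ (x + y) # post) = L (pre @ x # post) + L (pre @ y # post)"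
    and R_add: "\<And>pre x y post. R (pre @ (x + y) # post) = R (pre @ x # post) + R (pre @ y # post)"
    and agree: "\<And>ws. list_all2 P ws ps \<Longrightarrow> L (map f ws) = R (map f ws)"
    and sums: "list_all2 (\<lambda>x p. \<exists>us. (\<forall>u\<in>set us. P u p) \<and> x = sum_list (map f us)) xs ps"
  shows "L xs = R xs"
proof -
  have "L (map f pre @ xs) = R (map f pre @ xs)"
    if "list_all2 (\<lambda>x p. \<exists>us. (\<forall>u\<in>set us. P u p) \<and> x = sum_list (map f us)) xs qs"
      and "list_all2 P pre ps'" and "ps' @ qs = ps"
    for pre ps' xs qs
    using that
  proof (induction xs qs arbitrary: pre ps' rule: list_all2_induct)
    case Nil
    then show ?case using agree[of pre] by simp
  next
    case (Cons x xs p qs)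
    obtain us where us: "\<forall>u\<in>set us. P u p" "x = sum_list (map f us)" using Cons.hyps(1) by blast
    have "L (map f pre @ x # xs) = (\<Sum>u\<leftarrow>us. L (map f pre @ f u # xs))"
      using additive_at_sum_list[where L = L and pre = "map f pre" and post = xs and xs = "map f us", OF L_add] us(2)
      by (simp add: comp_def)
    also have "\<dots> = (\<Sum>u\<leftarrow>us. R (map f pre @ f u # xs))"
    proof (intro arg_cong[where f = sum_list] map_cong refl)
      fix u assume "u \<in> set us"
      then have "list_all2 P (pre @ [u]) (ps' @ [p])"
        using Cons.prems(1) us(1) by (simp add: list_all2_appendI)
      then show "L (map f pre @ f u # xs) = R (map f pre @ f u # xs)"
        using Cons.IH[of "pre @ [u]" "ps' @ [p]"] Cons.prems(2) by simp
    qed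
    also have "\<dots> = R (map f pre @ x # xs)"
      using additive_at_sum_list[where L = R and pre = "map f pre" and post = xs and xs = "map f us", OF R_add] us(2)
      by (simp add: comp_def)
    finally show ?case .
  qed
  from this[of xs ps "[]" "[]"] sums show ?thesis by simp
qed

section \<open>Words in the letters of \<open>A\<close> and \<open>F\<close> and their normal form\<close>

datatype ('a, 'f) letter = ALetter 'a | FLetter 'f

fun letter_elem :: "('a::zero, 'f::zero) letter \<Rightarrow> 'a \<times> 'f" where
  "letter_elem (ALetter c) = (c, 0)"
| "letter_elem (FLetter g) = (0, g)"

fun F_letters :: "('a, 'f) letter list \<Rightarrow> 'f list" where
  "F_letters [] = []"
| "F_letters (ALetter c # ps) = F_letters ps"
| "F_letters (FLetter g # ps) = g # F_letters ps"

lemma F_letters_append: "F_letters (ps @ qs) = F_letters ps @ F_letters qs"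
  by (induction ps rule: F_letters.induct) auto

lemma F_letters_concat: "F_letters (concat pss) = concat (map F_letters pss)"
  by (induction pss) (auto simp: F_letters_append)

lemma set_F_letters: "g \<in> set (F_letters ps) \<longleftrightarrow> FLetter g \<in> set ps"
  by (induction ps rule: F_letters.induct) auto

definition letters_in :: "'a set \<Rightarrow> 'f set \<Rightarrow> ('a, 'f) letter list \<Rightarrow> bool" where
  "letters_in S T ps \<longleftrightarrow> (\<forall>c. ALetter c \<in> set ps \<longrightarrow> c \<in> S) \<and> (\<forall>g. FLetter g \<in> set ps \<longrightarrow> g \<in> T)"

lemma letters_in_simps [simp]:
  "letters_in S T []"
  "letters_in S T (ALetter c # ps) \<longleftrightarrow> c \<in> S \<and> letters_in S T ps"
  "letters_in S T (FLetter g # ps) \<longleftrightarrow> g \<in> T \<and> letters_in S T ps"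
  "letters_in S T (ps @ qs) \<longleftrightarrow> letters_in S T ps \<and> letters_in S T qs"
  by (auto simp: letters_in_def)

lemma letters_in_mono: "letters_in S T ps \<Longrightarrow> S \<subseteq> S' \<Longrightarrow> T \<subseteq> T' \<Longrightarrow> letters_in S' T' ps"
  by (auto simp: letters_in_def)

text \<open>The normal form of a word is the pair \<open>([c\<^sub>0, \<dots>, c\<^sub>m], [g\<^sub>1, \<dots>, g\<^sub>m])\<close> with
  \<open>c\<^sub>0 g\<^sub>1 c\<^sub>1 \<cdots> g\<^sub>m c\<^sub>m\<close> equal to the word: adjacent A-letters are multiplied and \<open>1\<close> is
  inserted between adjacent F-letters and at the ends.\<close>

fun normal_form :: "('a::monoid_mult, 'f) letter list \<Rightarrow> 'a list \<times> 'f list" where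
  "normal_form [] = ([1], [])"
| "normal_form (ALetter c # ps) =
     (c * hd (fst (normal_form ps)) # tl (fst (normal_form ps)), snd (normal_form ps))"
| "normal_form (FLetter g # ps) = (1 # fst (normal_form ps), g # snd (normal_form ps))"

definition nf_mult :: "'a::times list \<times> 'f list \<Rightarrow> 'a list \<times> 'f list \<Rightarrow> 'a list \<times> 'f list" where
  "nf_mult A B = (butlast (fst A) @ [last (fst A) * hd (fst B)] @ tl (fst B), snd A @ snd B)"

lemma length_normal_form: "length (fst (normal_form ps)) = Suc (length (snd (normal_form ps)))"
proof (induction ps rule: normal_form.induct)
  case (2 c ps)
  then show ?case by (cases "fst (normal_form ps)") auto
qed auto

lemma normal_form_obtain_Cons:
  obtains c cs where "fst (normal_form ps) = c # cs"
  using length_normal_form[of ps] by (cases "fst (normal_form ps)") auto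

lemma snd_normal_form: "snd (normal_form ps) = F_letters ps"
  by (induction ps rule: normal_form.induct) auto

lemma set_normal_form_subset:
  assumes "1 \<in> S" "\<forall>x\<in>S. \<forall>y\<in>S. x * y \<in> S" "letters_in S T ps"
  shows "set (fst (normal_form ps)) \<subseteq> S"
  using assms(3)
proof (induction ps rule: normal_form.induct)
  case (2 c ps)
  then show ?case using assms(2) by (cases ps rule: normal_form_obtain_Cons) auto
qed (use assms in auto)

lemma normal_form_append: "normal_form (ps @ qs) = nf_mult (normal_form ps) (normal_form qs)"
proof (induction ps rule: normal_form.induct)
  case 1
  then show ?case by (cases qs rule: normal_form_obtain_Cons) (auto simp: nf_mult_def prod_eq_iff)
next
  case (2 c ps)
  obtain d r where "fst (normal_form ps) = d # r" by (rule normal_form_obtain_Cons)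
  then show ?case using 2 by (cases qs rule: normal_form_obtain_Cons) (cases r, auto simp: nf_mult_def mult.assoc)
next
  case (3 g ps)
  then show ?case by (cases ps rule: normal_form_obtain_Cons) (auto simp: nf_mult_def)
qed

lemma normal_form_obtain_ends:
  assumes "F_letters ps \<noteq> []"
  obtains c\<^sub>0 mid c\<^sub>m where "fst (normal_form ps) = c\<^sub>0 # mid @ [c\<^sub>m]"
    and "length mid = length (F_letters ps) - 1"
proof -
  obtain c\<^sub>0 r where r: "fst (normal_form ps) = c\<^sub>0 # r" by (rule normal_form_obtain_Cons)
  moreover have l: "length r = length (F_letters ps)"
    using length_normal_form[of ps] r by (simp add: snd_normal_form)
  moreover from assms l obtain mid c\<^sub>m where "r = mid @ [c\<^sub>m]" by (cases r rule: rev_cases) auto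
  ultimately show ?thesis using that by auto
qed

lemma normal_form_in_context:
  assumes "F_letters ps \<noteq> []"
  shows "normal_form (ALetter x # ps @ [ALetter y]) =
    (x * hd (fst (normal_form ps)) # butlast (tl (fst (normal_form ps))) @ [last (fst (normal_form ps)) * y],
     snd (normal_form ps))"
proof -
  obtain c\<^sub>0 mid c\<^sub>m where e: "fst (normal_form ps) = c\<^sub>0 # mid @ [c\<^sub>m]"
    using assms by (rule normal_form_obtain_ends)
  have "normal_form (ALetter x # ps @ [ALetter y]) =
      nf_mult (normal_form [ALetter x]) (nf_mult (normal_form ps) (normal_form [ALetter y]))"
    by (metis append_Cons append_Nil normal_form_append)
  then show ?thesis using e by (simp add: nf_mult_def)
qed

lemma hd_normal_form_append:
  "F_letters ps \<noteq> [] \<Longrightarrow> hd (fst (normal_form (ps @ qs))) = hd (fst (normal_form ps))"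
  by (elim normal_form_obtain_ends) (simp add: normal_form_append nf_mult_def)

section \<open>The algebra \<open>B = A \<oplus> F\<close>\<close>

locale ncps_B' =
  fixes smA :: "complex \<Rightarrow> 'a::ring_1 \<Rightarrow> 'a" and \<phi> :: "'a \<Rightarrow> complex"
    and smF :: "complex \<Rightarrow> 'f::ring \<Rightarrow> 'f"
    and lA :: "'a \<Rightarrow> 'f \<Rightarrow> 'f" and rA :: "'f \<Rightarrow> 'a \<Rightarrow> 'f" and \<Phi> :: "'f \<Rightarrow> complex"
  assumes ncps: "ncpsB' smA \<phi> smF lA rA \<Phi>"
begin

abbreviation mulB :: "'a \<times> 'f \<Rightarrow> 'a \<times> 'f \<Rightarrow> 'a \<times> 'f" (infixl "\<odot>" 70)
  where "x \<odot> y \<equiv> bmul lA rA x y"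

abbreviation prodB :: "('a \<times> 'f) list \<Rightarrow> 'a \<times> 'f"
  where "prodB \<equiv> bprod lA rA"

lemma cvs_smA: "cvs smA" and cvs_smF: "cvs smF"
  and clinear_phi: "clinear_fun smA \<phi>" and clinear_Phi: "clinear_fun smF \<Phi>"
  and phi_one: "\<phi> 1 = 1"
  using ncps by (simp_all add: ncpsB'_def calg_def)

lemma smA_mult: "smA c x * y = smA c (x * y)" "x * smA c y = smA c (x * y)"
  using ncps unfolding ncpsB'_def calg_def by metis+

lemma phi_add: "\<phi> (x + y) = \<phi> x + \<phi> y" and phi_smA: "\<phi> (smA c x) = c * \<phi> x"
  and Phi_add: "\<Phi> (f + g) = \<Phi> f + \<Phi> g"
  using clinear_phi clinear_Phi by (simp_all add: clinear_fun_def)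

lemmas phi_zero = clinear_fun_zero[OF clinear_phi]
  and phi_diff = clinear_fun_diff[OF clinear_phi]
  and Phi_zero = clinear_fun_zero[OF clinear_Phi]

lemma bimodule_laws:
  "lA (a + b) f = lA a f + lA b f" "lA a (f + g) = lA a f + lA a g"
  "rA (f + g) a = rA f a + rA g a" "rA f (a + b) = rA f a + rA f b"
  "lA (smA c a) f = smF c (lA a f)" "lA a (smF c f) = smF c (lA a f)"
  "rA f (smA c a) = smF c (rA f a)" "rA (smF c f) a = smF c (rA f a)"
  "lA (a * b) f = lA a (lA b f)" "rA f (a * b) = rA (rA f a) b"
  "lA 1 f = f" "rA f 1 = f" "lA a (rA f b) = rA (lA a f) b"
  "lA a (f * g) = lA a f * g" "rA (f * g) a = f * rA g a" "rA f a * g = f * lA a g"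
  using ncps unfolding ncpsB'_def by auto

lemma actions_zero: "lA 0 f = 0" "lA a 0 = 0" "rA 0 a = 0" "rA f 0 = 0"
  using bimodule_laws(1)[of 0 0 f] bimodule_laws(2)[of a 0 0]
    bimodule_laws(3)[of 0 0 a] bimodule_laws(4)[of f 0 0] by simp_all

lemma bmul_assoc: "x \<odot> y \<odot> z = x \<odot> (y \<odot> z)"
  by (cases x; cases y; cases z) (simp add: bmul_def bimodule_laws algebra_simps)

lemma bmul_one: "(1, 0) \<odot> x = x" "x \<odot> (1, 0) = x"
  by (cases x; simp add: bmul_def bimodule_laws actions_zero)+

lemma bmul_add: "(x + y) \<odot> z = x \<odot> z + y \<odot> z" "z \<odot> (x + y) = z \<odot> x + z \<odot> y"
  by (cases x; cases y; cases z; simp add: bmul_def bimodule_laws algebra_simps)+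

lemma bmul_zero: "0 \<odot> z = 0" "z \<odot> 0 = 0"
  by (cases z; simp add: bmul_def zero_prod_def actions_zero)+

lemma bmul_sum_list: "sum_list xs \<odot> y = (\<Sum>x\<leftarrow>xs. x \<odot> y)" "y \<odot> sum_list xs = (\<Sum>x\<leftarrow>xs. y \<odot> x)"
  by (induction xs) (simp_all add: bmul_add bmul_zero)

lemma bsm_bmul: "bsm smA smF c (x \<odot> y) = bsm smA smF c x \<odot> y"
  using ncps by (cases x; cases y) (simp add: bmul_def bsm_def ncpsB'_def calg_def cvs_def)

lemma bsm_add: "bsm smA smF c (x + y) = bsm smA smF c x + bsm smA smF c y"
  using cvs_smA cvs_smF by (cases x; cases y) (simp add: bsm_def cvs_def)

lemma bmul_A_A: "(c, 0) \<odot> (d, 0) = (c * d, 0)"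
  by (simp add: bmul_def actions_zero)

lemma fst_bmul: "fst (x \<odot> y) = fst x * fst y"
  by (simp add: bmul_def)

lemma bprod_Nil: "prodB [] = (1, 0)" and bprod_Cons: "prodB (x # xs) = x \<odot> prodB xs"
  by (simp_all add: bprod_def)

lemma bprod_append: "prodB (xs @ ys) = prodB xs \<odot> prodB ys"
  by (induction xs) (simp_all add: bprod_Cons bprod_Nil bmul_one bmul_assoc)

lemma fst_bprod: "fst (prodB xs) = prod_list (map fst xs)"
  by (induction xs) (simp_all add: bprod_Cons bprod_Nil fst_bmul)

definition eval_word :: "('a, 'f) letter list \<Rightarrow> 'a \<times> 'f" where
  "eval_word ps = prodB (map letter_elem ps)"

lemma eval_word_Nil: "eval_word [] = (1, 0)"
  and eval_word_Cons: "eval_word (p # ps) = letter_elem p \<odot> eval_word ps"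
  and eval_word_append: "eval_word (ps @ qs) = eval_word ps \<odot> eval_word qs"
  by (simp_all add: eval_word_def bprod_Nil bprod_Cons bprod_append)

lemma eval_word_single: "eval_word [p] = letter_elem p"
  by (simp add: eval_word_Cons eval_word_Nil bmul_one)

lemma eval_word_ALetter_ALetter: "eval_word (ALetter x # ALetter a # ps) = eval_word (ALetter (x * a) # ps)"
  by (simp add: eval_word_Cons bmul_A_A flip: bmul_assoc)

lemma bprod_map_eval_word: "prodB (map eval_word pss) = eval_word (concat pss)"
  by (induction pss) (simp_all add: bprod_Cons bprod_Nil eval_word_Nil eval_word_append)

lemma fst_eval_word: "F_letters ps \<noteq> [] \<Longrightarrow> fst (eval_word ps) = 0"
proof (induction ps rule: F_letters.induct)
  case (2 c ps)
  then show ?case by (simp add: eval_word_Cons fst_bmul)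
qed (simp_all add: eval_word_Cons fst_bmul)

lemma interleave_Cons:
  "length cs = Suc (length gs) \<Longrightarrow> interleave (d # cs) (g # gs) = (d, 0) # (0, g) # interleave cs gs"
  by (cases cs rule: rev_cases) (auto simp: interleave_def)

lemma eval_word_eq_interleave:
  "eval_word ps = prodB (interleave (fst (normal_form ps)) (snd (normal_form ps)))"
proof (induction ps rule: normal_form.induct)
  case 1
  then show ?case by (simp add: interleave_def eval_word_Nil bprod_Cons bprod_Nil bmul_one)
next
  case (2 c ps)
  obtain d r where dr: "fst (normal_form ps) = d # r" by (rule normal_form_obtain_Cons)
  have len: "length r = length (snd (normal_form ps))" using length_normal_form[of ps] dr by simp
  show ?case
  proof (cases "snd (normal_form ps)")
    case Nil
    then show ?thesis using 2 dr len
      by (simp add: interleave_def eval_word_Cons bprod_Cons bprod_Nil bmul_one bmul_A_A)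
  next
    case (Cons g gs)
    then show ?thesis using 2 dr len
      by (simp add: interleave_Cons eval_word_Cons bprod_Cons flip: bmul_assoc bmul_A_A)
  qed
next
  case (3 g ps)
  then show ?case using length_normal_form[of ps]
    by (simp add: interleave_Cons eval_word_Cons bprod_Cons bmul_one)
qed

text \<open>The right-hand side of the factorisation of \<open>\<Phi>\<close> required by B'-freeness, evaluated at
  a normal form.\<close>

definition Phi_formula :: "'a list \<times> 'f list \<Rightarrow> complex" where
  "Phi_formula A = \<phi> (hd (fst A) * last (fst A)) * (\<Prod>l\<in>{1..<length (snd A)}. \<phi> (fst A ! l))
     * \<Phi> (fprod (snd A))"

lemma Phi_formula_in_context:
  assumes "F_letters ps \<noteq> []"
  obtains R where "Phi_formula (normal_form ps) = \<phi> (hd (fst (normal_form ps)) * last (fst (normal_form ps))) * R"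
    and "Phi_formula (normal_form (ALetter x # ps @ [ALetter y])) =
      \<phi> (x * hd (fst (normal_form ps)) * (last (fst (normal_form ps)) * y)) * R"
proof -
  obtain c\<^sub>0 mid c\<^sub>m where e: "fst (normal_form ps) = c\<^sub>0 # mid @ [c\<^sub>m]"
    and lm: "length mid = length (F_letters ps) - 1"
    using assms by (rule normal_form_obtain_ends)
  define n where "n = length (snd (normal_form ps))"
  define R where "R = (\<Prod>l\<in>{1..<n}. \<phi> (fst (normal_form ps) ! l)) * \<Phi> (fprod (snd (normal_form ps)))"
  have "(\<Prod>l\<in>{1..<n}. \<phi> ((x * c\<^sub>0 # mid @ [c\<^sub>m * y]) ! l)) = (\<Prod>l\<in>{1..<n}. \<phi> (fst (normal_form ps) ! l))"
  proof (rule prod.cong)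
    fix l assume "l \<in> {1..<n}"
    then obtain l' where "l = Suc l'" "l' < length mid"
      using lm by (cases l) (auto simp: n_def snd_normal_form)
    then show "\<phi> ((x * c\<^sub>0 # mid @ [c\<^sub>m * y]) ! l) = \<phi> (fst (normal_form ps) ! l)"
      using e by (simp add: nth_append)
  qed simp
  moreover have "normal_form (ALetter x # ps @ [ALetter y]) = (x * c\<^sub>0 # mid @ [c\<^sub>m * y], snd (normal_form ps))"
    using normal_form_in_context[OF assms] e by simp
  ultimately have "Phi_formula (normal_form (ALetter x # ps @ [ALetter y])) = \<phi> (x * c\<^sub>0 * (c\<^sub>m * y)) * R"
    unfolding Phi_formula_def R_def n_def by (simp add: mult.assoc)
  moreover have "Phi_formula (normal_form ps) = \<phi> (c\<^sub>0 * c\<^sub>m) * R"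
    unfolding Phi_formula_def R_def n_def using e by (simp add: mult.assoc)
  ultimately show ?thesis using e by (intro that[of R]) simp_all
qed

lemma Phi_formula_nf_mult_zero:
  assumes "snd A \<noteq> []" "snd B \<noteq> []" "length (fst A) = Suc (length (snd A))"
    and "\<phi> (last (fst A) * hd (fst B)) = 0"
  shows "Phi_formula (nf_mult A B) = 0"
proof -
  let ?k = "length (snd A)"
  have "?k \<in> {1..<length (snd (nf_mult A B))}"
    using assms(1,2) by (cases "snd A"; cases "snd B") (auto simp: nf_mult_def)
  moreover have "fst (nf_mult A B) ! ?k = last (fst A) * hd (fst B)"
    using assms(3) by (simp add: nf_mult_def nth_append)
  ultimately have "(\<Prod>l\<in>{1..<length (snd (nf_mult A B))}. \<phi> (fst (nf_mult A B) ! l)) = 0"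
    using assms(4) by (metis (no_types, lifting) finite_atLeastLessThan prod_zero_iff)
  then show ?thesis by (simp add: Phi_formula_def)
qed

text \<open>The value the Leibniz rule predicts for \<open>\<Phi> (snd ((x, 0) \<odot> prodB bs))\<close>.\<close>

primrec leibniz :: "'a \<Rightarrow> ('a \<times> 'f) list \<Rightarrow> complex" where
  "leibniz x [] = 0"
| "leibniz x (b # bs) = \<Phi> (snd b) * \<phi> (x * fst (prodB bs)) + leibniz (x * fst b) bs"

lemma leibniz_zero: "leibniz 0 bs = 0"
  by (induction bs) (simp_all add: phi_zero)

lemma leibniz_add_left: "leibniz (x + y) bs = leibniz x bs + leibniz y bs"
  by (induction bs arbitrary: x y) (simp_all add: algebra_simps phi_add)

lemma leibniz_additive:
  "leibniz x (pre @ (u + v) # post) = leibniz x (pre @ u # post) + leibniz x (pre @ v # post)"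
proof (induction pre arbitrary: x)
  case Nil
  then show ?case by (simp add: algebra_simps Phi_add leibniz_add_left)
next
  case (Cons b pre)
  then show ?case by (simp add: algebra_simps phi_add bprod_append bprod_Cons bmul_add fst_bmul)
qed

lemma leibniz_conv_sum:
  "leibniz x bs = (\<Sum>k<length bs. \<Phi> (snd (bs ! k)) *
     \<phi> (x * prod_list (map fst (take k bs)) * prod_list (map fst (drop (Suc k) bs))))"
proof (induction bs arbitrary: x)
  case (Cons b bs)
  then show ?case by (simp add: sum.lessThan_Suc_shift fst_bprod mult.assoc del: sum.lessThan_Suc)
qed simp

end

locale B'_free_family = ncps_B' smA \<phi> smF lA rA \<Phi>
  for smA :: "complex \<Rightarrow> 'a::ring_1 \<Rightarrow> 'a" and \<phi> :: "'a \<Rightarrow> complex"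
    and smF :: "complex \<Rightarrow> 'f::ring \<Rightarrow> 'f"
    and lA :: "'a \<Rightarrow> 'f \<Rightarrow> 'f" and rA :: "'f \<Rightarrow> 'a \<Rightarrow> 'f" and \<Phi> :: "'f \<Rightarrow> complex" +
  fixes I :: "'i set" and As :: "'i \<Rightarrow> 'a set" and Fs :: "'i \<Rightarrow> 'f set"
  assumes subalg_As: "\<forall>i\<in>I. subalg smA (As i) \<and> 1 \<in> As i"
    and subalg_Fs: "\<forall>i\<in>I. subalg smF (Fs i)"
    and B'_free: "Bprime_free smA \<phi> smF lA rA \<Phi> I As Fs"
begin

abbreviation "A\<^sub>0 \<equiv> gen_alg smA (\<Union>j\<in>I. As j)"
abbreviation "F\<^sub>0 \<equiv> gen_alg smF (\<Union>j\<in>I. Fs j)"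

lemma A0_mult: "x \<in> A\<^sub>0 \<Longrightarrow> y \<in> A\<^sub>0 \<Longrightarrow> x * y \<in> A\<^sub>0"
  unfolding gen_alg_def subalg_def by blast

lemma As_in_A0: "j \<in> I \<Longrightarrow> x \<in> As j \<Longrightarrow> x \<in> A\<^sub>0"
  unfolding gen_alg_def by blast

lemma Fs_in_F0: "j \<in> I \<Longrightarrow> g \<in> Fs j \<Longrightarrow> g \<in> F\<^sub>0"
  unfolding gen_alg_def by blast

lemma As_mult: "j \<in> I \<Longrightarrow> x \<in> As j \<Longrightarrow> y \<in> As j \<Longrightarrow> x * y \<in> As j"
  and As_add: "j \<in> I \<Longrightarrow> x \<in> As j \<Longrightarrow> y \<in> As j \<Longrightarrow> x + y \<in> As j"
  and As_smA: "j \<in> I \<Longrightarrow> x \<in> As j \<Longrightarrow> smA c x \<in> As j"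
  and As_one: "j \<in> I \<Longrightarrow> 1 \<in> As j"
  and As_zero: "j \<in> I \<Longrightarrow> 0 \<in> As j"
  using subalg_As unfolding subalg_def by auto

lemma Fs_mult: "j \<in> I \<Longrightarrow> f \<in> Fs j \<Longrightarrow> g \<in> Fs j \<Longrightarrow> f * g \<in> Fs j"
  using subalg_Fs unfolding subalg_def by auto

lemma one_A0: "I \<noteq> {} \<Longrightarrow> 1 \<in> A\<^sub>0"
  using As_one As_in_A0 by blast

lemma Phi_factorisation:
  "gs \<noteq> [] \<Longrightarrow> length cs = length gs + 1 \<Longrightarrow> set cs \<subseteq> A\<^sub>0 \<Longrightarrow> set gs \<subseteq> F\<^sub>0 \<Longrightarrow>
    \<Phi> (snd (prodB (interleave cs gs))) = Phi_formula (cs, gs)"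
  using B'_free unfolding Bprime_free_def Let_def Phi_formula_def by simp

lemma Phi_alternating_zero:
  "length gs \<ge> 2 \<Longrightarrow> successively (\<noteq>) (map fst gs) \<Longrightarrow>
    (\<forall>(j, g) \<in> set gs. j \<in> I \<and> g \<in> Fs j) \<Longrightarrow> \<Phi> (fprod (map snd gs)) = 0"
  using B'_free unfolding Bprime_free_def by blast

section \<open>Moments of alternating products in the \<open>A\<^sub>i\<close>\<close>

definition centered :: "'a \<Rightarrow> 'a" where
  "centered c = c - smA (\<phi> c) 1"

lemma centered_in: "j \<in> I \<Longrightarrow> c \<in> As j \<Longrightarrow> centered c \<in> As j"
  unfolding centered_def using subalg_As by (intro subalg_diff[OF cvs_smA] As_smA As_one) auto

lemma phi_centered: "\<phi> (centered c) = 0"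
  by (simp add: centered_def phi_diff phi_smA phi_one)

definition alternating_centered :: "('i \<times> 'a) list \<Rightarrow> bool" where
  "alternating_centered ts \<longleftrightarrow>
     successively (\<noteq>) (map fst ts) \<and> (\<forall>(j, c) \<in> set ts. j \<in> I \<and> c \<in> As j \<and> \<phi> c = 0)"

abbreviation aprod :: "('i \<times> 'a) list \<Rightarrow> 'a" where
  "aprod ts \<equiv> prod_list (map snd ts)"

lemma alternating_centered_Nil [simp]: "alternating_centered []"
  by (simp add: alternating_centered_def)

lemma alternating_centered_append:
  "alternating_centered (xs @ ys) \<longleftrightarrow> alternating_centered xs \<and> alternating_centered ys \<and>
     (xs = [] \<or> ys = [] \<or> fst (last xs) \<noteq> fst (hd ys))"
  unfolding alternating_centered_def by (auto simp: successively_append_iff last_map hd_map)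

lemma alternating_centered_Cons:
  "alternating_centered (x # xs) \<longleftrightarrow> fst x \<in> I \<and> snd x \<in> As (fst x) \<and> \<phi> (snd x) = 0 \<and>
     alternating_centered xs \<and> (xs = [] \<or> fst x \<noteq> fst (hd xs))"
  unfolding alternating_centered_def by (cases x; cases xs) auto

lemma alternating_centered_take: "alternating_centered xs \<Longrightarrow> alternating_centered (take k xs)"
  and alternating_centered_drop: "alternating_centered xs \<Longrightarrow> alternating_centered (drop k xs)"
  using alternating_centered_append[of "take k xs" "drop k xs"] by simp_all

lemma phi_aprod_zero: "alternating_centered ts \<Longrightarrow> ts \<noteq> [] \<Longrightarrow> \<phi> (aprod ts) = 0"
  using B'_free unfolding Bprime_free_def alternating_centered_def by blast

lemma aprod_in_A0: "alternating_centered X \<Longrightarrow> I \<noteq> {} \<Longrightarrow> aprod X \<in> A\<^sub>0"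
  by (induction X) (auto simp: alternating_centered_Cons A0_mult one_A0 As_in_A0)

text \<open>Centering \<open>D\<close> makes \<open>X D Y\<close> alternating, so only the scalar part of \<open>D\<close> survives.\<close>

lemma phi_factor_out_middle:
  assumes "alternating_centered X" "alternating_centered Y" "j \<in> I" "D \<in> As j"
    and "X \<noteq> [] \<Longrightarrow> fst (last X) \<noteq> j" "Y \<noteq> [] \<Longrightarrow> fst (hd Y) \<noteq> j"
  shows "\<phi> (aprod X * D * aprod Y) = \<phi> D * \<phi> (aprod X * aprod Y)"
proof -
  have "alternating_centered (X @ (j, centered D) # Y)"
    using assms centered_in phi_centered by (auto simp: alternating_centered_append alternating_centered_Cons)
  then have "\<phi> (aprod X * centered D * aprod Y) = 0"
    using phi_aprod_zero by (fastforce simp: mult.assoc)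
  moreover have "aprod X * D * aprod Y = aprod X * centered D * aprod Y + smA (\<phi> D) (aprod X * aprod Y)"
    by (simp add: centered_def algebra_simps smA_mult)
  ultimately show ?thesis by (simp add: phi_add phi_smA)
qed

lemma phi_sandwich_zero:
  assumes "alternating_centered Y" "Y \<noteq> []" "fst (hd Y) \<noteq> j" "fst (last Y) \<noteq> j"
    and "j \<in> I" "x \<in> As j" "y \<in> As j"
  shows "\<phi> (x * aprod Y * y) = 0"
proof -
  have Y': "alternating_centered (Y @ [(j, centered y)])"
    using assms centered_in phi_centered by (auto simp: alternating_centered_append alternating_centered_Cons)
  have "\<phi> (x * aprod (Y @ [(j, centered y)])) = \<phi> x * \<phi> (aprod (Y @ [(j, centered y)]))"
    using phi_factor_out_middle[of "[]" "Y @ [(j, centered y)]" j x] Y' assms by simp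
  also have "\<dots> = 0" using phi_aprod_zero[OF Y'] by simp
  finally have "\<phi> (x * aprod (Y @ [(j, centered y)])) = 0" .
  moreover have "\<phi> (x * aprod Y) = \<phi> x * \<phi> (aprod Y)"
    using phi_factor_out_middle[of "[]" Y j x] assms by simp
  moreover have "x * aprod Y * y = x * aprod (Y @ [(j, centered y)]) + smA (\<phi> y) (x * aprod Y)"
    by (simp add: centered_def algebra_simps smA_mult)
  ultimately show ?thesis using phi_aprod_zero[OF assms(1,2)] by (simp add: phi_add phi_smA)
qed

lemma phi_aprod_aprod:
  "alternating_centered X \<Longrightarrow> alternating_centered Y \<Longrightarrow> \<phi> (aprod X * aprod Y) =
     (if map fst (rev X) = map fst Y then \<Prod>l<length Y. \<phi> (snd (rev X ! l) * snd (Y ! l)) else 0)"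
proof (induction Y arbitrary: X)
  case Nil
  then show ?case using phi_aprod_zero[of X] by (cases X) (auto simp: phi_one)
next
  case (Cons y Y)
  obtain j b where y: "y = (j, b)" by (cases y)
  show ?case
  proof (cases X rule: rev_cases)
    case Nil
    then show ?thesis using phi_aprod_zero[OF Cons.prems(2)] by simp
  next
    case (snoc X' x)
    obtain k a where x: "x = (k, a)" by (cases x)
    show ?thesis
    proof (cases "k = j")
      case False
      have "alternating_centered (X @ y # Y)"
        using Cons.prems False snoc x y by (simp add: alternating_centered_append alternating_centered_Cons)
      then have "\<phi> (aprod (X @ y # Y)) = 0" using phi_aprod_zero by blast
      then show ?thesis using False snoc x y by (simp add: mult.assoc)
    next
      case True
      have X': "alternating_centered X'" and Y: "alternating_centered Y"
        using Cons.prems snoc by (auto simp: alternating_centered_append alternating_centered_Cons)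
      have j: "j \<in> I" and ab: "a * b \<in> As j"
        using Cons.prems snoc x y True by (auto simp: alternating_centered_append alternating_centered_Cons As_mult)
      have "X' \<noteq> [] \<Longrightarrow> fst (last X') \<noteq> j"
        using Cons.prems(1) snoc x True by (auto simp: alternating_centered_append)
      moreover have "Y \<noteq> [] \<Longrightarrow> fst (hd Y) \<noteq> j"
        using Cons.prems(2) y by (auto simp: alternating_centered_Cons)
      moreover have "aprod X * aprod (y # Y) = aprod X' * (a * b) * aprod Y"
        using snoc x y by (simp add: mult.assoc)
      ultimately have "\<phi> (aprod X * aprod (y # Y)) = \<phi> (a * b) * \<phi> (aprod X' * aprod Y)"
        using phi_factor_out_middle[OF X' Y j ab] by simp
      then show ?thesis using Cons.IH[OF X' Y] snoc x y True
        by (simp add: prod.lessThan_Suc_shift del: prod.lessThan_Suc)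
    qed
  qed
qed

lemma phi_omit_one:
  assumes T: "alternating_centered T" and k: "k < length T"
  shows "\<phi> (aprod (take k T) * aprod (drop (Suc k) T)) =
    (if odd (length T) \<and> rev (map fst T) = map fst T \<and> k = length T div 2
     then \<Prod>l<k. \<phi> (snd (T ! l) * snd (T ! (length T - 1 - l))) else 0)"
proof -
  let ?n = "length T"
  have split: "\<phi> (aprod (take k T) * aprod (drop (Suc k) T)) =
     (if map fst (rev (take k T)) = map fst (drop (Suc k) T)
      then \<Prod>l<length (drop (Suc k) T). \<phi> (snd (rev (take k T) ! l) * snd (drop (Suc k) T ! l)) else 0)"
    using phi_aprod_aprod[OF alternating_centered_take[OF T] alternating_centered_drop[OF T]] .
  have cond: "map fst (rev (take k T)) = map fst (drop (Suc k) T) \<longleftrightarrow>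
      odd ?n \<and> rev (map fst T) = map fst T \<and> k = ?n div 2"
    using rev_take_eq_drop_Suc_iff[of k "map fst T"] k by (simp add: rev_map take_map drop_map)
  show ?thesis
  proof (cases "odd ?n \<and> rev (map fst T) = map fst T \<and> k = ?n div 2")
    case True
    then have n: "?n = Suc (2 * k)" using odd_two_times_div_two_succ[of ?n] by simp
    have "(\<Prod>l<length (drop (Suc k) T). \<phi> (snd (rev (take k T) ! l) * snd (drop (Suc k) T ! l))) =
        (\<Prod>l<k. (\<lambda>i. \<phi> (snd (T ! i) * snd (T ! (?n - 1 - i)))) (k - Suc l))"
    proof (rule prod.cong)
      fix l assume "l \<in> {..<k}"
      moreover have "?n - 1 - (k - Suc l) = Suc k + l" if "l < k" using that n by simp
      ultimately show "\<phi> (snd (rev (take k T) ! l) * snd (drop (Suc k) T ! l)) =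
          (\<lambda>i. \<phi> (snd (T ! i) * snd (T ! (?n - 1 - i)))) (k - Suc l)"
        using n by (simp add: rev_nth)
    qed (use n in simp)
    also have "\<dots> = (\<Prod>l<k. \<phi> (snd (T ! l) * snd (T ! (?n - 1 - l))))"
      by (rule prod.nat_diff_reindex)
    finally have "(\<Prod>l<length (drop (Suc k) T). \<phi> (snd (rev (take k T) ! l) * snd (drop (Suc k) T ! l))) =
        (\<Prod>l<k. \<phi> (snd (T ! l) * snd (T ! (?n - 1 - l))))" .
    moreover have "map fst (rev (take k T)) = map fst (drop (Suc k) T)" using cond True by blast
    ultimately show ?thesis unfolding split using True by simp
  next
    case False
    then have "map fst (rev (take k T)) \<noteq> map fst (drop (Suc k) T)" using cond by blast
    then show ?thesis unfolding split if_not_P[OF False] by simp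
  qed
qed

lemma sum_phi_omit_one:
  assumes "alternating_centered T"
  shows "(\<Sum>k<length T. z k * \<phi> (aprod (take k T) * aprod (drop (Suc k) T))) =
    (if odd (length T) \<and> rev (map fst T) = map fst T
     then (\<Prod>l<(length T - 1) div 2. \<phi> (snd (T ! l) * snd (T ! (length T - 1 - l)))) * z (length T div 2)
     else 0)"
proof -
  let ?n = "length T" and ?pal = "odd (length T) \<and> rev (map fst T) = map fst T"
  let ?P = "\<lambda>k. \<Prod>l<k. \<phi> (snd (T ! l) * snd (T ! (?n - 1 - l)))"
  have "(\<Sum>k<?n. z k * \<phi> (aprod (take k T) * aprod (drop (Suc k) T))) =
      (\<Sum>k<?n. if k = ?n div 2 then (if ?pal then z k * ?P k else 0) else 0)"
    using phi_omit_one[OF assms] by (intro sum.cong) auto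
  also have "\<dots> = (if ?pal then z (?n div 2) * ?P (?n div 2) else 0)"
    using odd_pos[of ?n] by simp
  also have "\<dots> = (if ?pal then ?P ((?n - 1) div 2) * z (?n div 2) else 0)"
    by (auto simp: mult.commute elim: oddE)
  finally show ?thesis .
qed

section \<open>\<open>\<Phi>\<close> on products of words\<close>

lemma Phi_eval_word:
  assumes "F_letters ps \<noteq> []" "letters_in A\<^sub>0 F\<^sub>0 ps" "I \<noteq> {}"
  shows "\<Phi> (snd (eval_word ps)) = Phi_formula (normal_form ps)"
proof -
  obtain cs gs where nf: "normal_form ps = (cs, gs)" by fastforce
  have "set cs \<subseteq> A\<^sub>0"
    using set_normal_form_subset[OF one_A0[OF assms(3)] _ assms(2)] A0_mult nf by auto
  moreover have "set gs \<subseteq> F\<^sub>0" "gs \<noteq> []"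
    using assms(1,2) snd_normal_form[of ps] nf by (auto simp: set_F_letters letters_in_def)
  moreover have "length cs = length gs + 1" using length_normal_form[of ps] nf by simp
  ultimately show ?thesis unfolding eval_word_eq_interleave nf by (simp add: Phi_factorisation)
qed

definition centered_letter :: "'i \<Rightarrow> ('a, 'f) letter list \<Rightarrow> bool" where
  "centered_letter j ps \<longleftrightarrow> (\<exists>a. ps = [ALetter a] \<and> a \<in> As j \<and> \<phi> a = 0)"

definition F_word :: "'i \<Rightarrow> ('a, 'f) letter list \<Rightarrow> bool" where
  "F_word j ps \<longleftrightarrow> F_letters ps \<noteq> [] \<and> letters_in (As j) (Fs j) ps"

definition generator_word :: "('a, 'f) letter list \<Rightarrow> 'i \<Rightarrow> bool" where
  "generator_word ps j \<longleftrightarrow> j \<in> I \<and> (centered_letter j ps \<or> F_word j ps)"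

lemma F_word_letters_in:
  assumes "F_word j ps" "j \<in> I"
  shows "letters_in A\<^sub>0 F\<^sub>0 ps"
proof -
  have "As j \<subseteq> A\<^sub>0" "Fs j \<subseteq> F\<^sub>0" using assms(2) As_in_A0 Fs_in_F0 by blast+
  then show ?thesis using assms(1) letters_in_mono unfolding F_word_def by blast
qed

lemma generator_words_letters_in: "list_all2 generator_word pss js \<Longrightarrow> letters_in A\<^sub>0 F\<^sub>0 (concat pss)"
  by (induction rule: list_all2_induct)
    (auto simp: generator_word_def centered_letter_def F_word_letters_in As_in_A0)

text \<open>Merging adjacent letters of equal index turns the word into an alternating one of length
  at least two.\<close>

lemma Phi_fprod_two_indices_zero:
  assumes "\<forall>(j, g) \<in> set tgs. j \<in> I \<and> g \<in> Fs j"
    and "i \<in> fst ` set tgs" "i' \<in> fst ` set tgs" "i \<noteq> i'"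
  shows "\<Phi> (fprod (map snd tgs)) = 0"
  using assms
proof (induction "length tgs" arbitrary: tgs rule: less_induct)
  case less
  show ?case
  proof (cases "successively (\<noteq>) (map fst tgs)")
    case True
    have "length tgs \<ge> 2"
    proof (rule ccontr)
      assume "\<not> length tgs \<ge> 2"
      then have "length tgs \<le> 1" by simp
      then have "\<forall>t\<in>set tgs. \<forall>t'\<in>set tgs. t = t'"
        by (cases tgs rule: remdups_adj.cases) auto
      then show False using less.prems(2-4) by auto
    qed
    then show ?thesis using Phi_alternating_zero True less.prems(1) by blast
  next
    case False
    then obtain xs a b ys where "map fst tgs = xs @ [a, b] @ ys" "\<not> a \<noteq> b"
      by (rule not_successively_obtain)
    then obtain xs' p q ys' where tgs: "tgs = xs' @ [p, q] @ ys'" "fst p = fst q"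
      by (auto simp: map_eq_append_conv)
    define tgs' where "tgs' = xs' @ [(fst p, snd p * snd q)] @ ys'"
    have "length tgs' < length tgs" using tgs tgs'_def by simp
    moreover have "\<forall>(j, g) \<in> set tgs'. j \<in> I \<and> g \<in> Fs j"
      using less.prems(1) tgs Fs_mult unfolding tgs'_def by (cases p; cases q) auto
    moreover have "fst ` set tgs' = fst ` set tgs" using tgs unfolding tgs'_def by auto
    ultimately have "\<Phi> (fprod (map snd tgs')) = 0"
      using less.hyps less.prems(2-4) by auto
    moreover have "fprod (map snd tgs') = fprod (map snd tgs)"
      using tgs unfolding tgs'_def by (simp add: fprod_merge_adjacent[of _ "snd p" "snd q", simplified])
    ultimately show ?thesis by simp
  qed
qed

lemma Phi_F_letters_two_indices_zero:
  assumes "\<forall>(i, ps) \<in> set wps. i \<in> I \<and> letters_in UNIV (Fs i) ps"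
    and "(j, ps) \<in> set wps" "(k, q) \<in> set wps" "j \<noteq> k" "F_letters ps \<noteq> []" "F_letters q \<noteq> []"
  shows "\<Phi> (fprod (F_letters (concat (map snd wps)))) = 0"
proof -
  define tgs where "tgs = concat (map (\<lambda>(i, ps). map (Pair i) (F_letters ps)) wps)"
  have index_in_tgs: "i \<in> fst ` set tgs" if "(i, ps) \<in> set wps" "F_letters ps \<noteq> []" for i ps
  proof -
    from that(2) obtain g where "g \<in> set (F_letters ps)" by (meson hd_in_set)
    with that(1) have "(i, g) \<in> set tgs" unfolding tgs_def by force
    then show ?thesis by force
  qed
  have "\<forall>(i, g) \<in> set tgs. i \<in> I \<and> g \<in> Fs i"
    using assms(1) by (fastforce simp: tgs_def set_F_letters letters_in_def)
  then have "\<Phi> (fprod (map snd tgs)) = 0"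
    using index_in_tgs assms(2-6) by (intro Phi_fprod_two_indices_zero[of tgs j k])
  moreover have "map snd tgs = F_letters (concat (map snd wps))"
    by (simp add: tgs_def F_letters_concat map_concat case_prod_beta comp_def)
  ultimately show ?thesis by simp
qed

lemma Phi_word_in_context:
  assumes X: "alternating_centered X" and Y: "alternating_centered Y"
    and ps: "F_word j ps" and j: "j \<in> I"
    and "X \<noteq> [] \<Longrightarrow> fst (last X) \<noteq> j" "Y \<noteq> [] \<Longrightarrow> fst (hd Y) \<noteq> j"
  shows "\<Phi> (snd (eval_word (ALetter (aprod X) # ps @ [ALetter (aprod Y)]))) =
    \<Phi> (snd (eval_word ps)) * \<phi> (aprod X * aprod Y)"
proof -
  have I: "I \<noteq> {}" using j by blast
  have F: "F_letters ps \<noteq> []" using ps by (simp add: F_word_def)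
  obtain R where R: "Phi_formula (normal_form ps) = \<phi> (hd (fst (normal_form ps)) * last (fst (normal_form ps))) * R"
    "Phi_formula (normal_form (ALetter (aprod X) # ps @ [ALetter (aprod Y)])) =
      \<phi> (aprod X * hd (fst (normal_form ps)) * (last (fst (normal_form ps)) * aprod Y)) * R"
    using F by (rule Phi_formula_in_context)
  have "set (fst (normal_form ps)) \<subseteq> As j"
    using set_normal_form_subset[of "As j"] ps j As_one As_mult by (auto simp: F_word_def)
  moreover have "fst (normal_form ps) \<noteq> []" using length_normal_form[of ps] by auto
  ultimately have D: "hd (fst (normal_form ps)) * last (fst (normal_form ps)) \<in> As j"
    using As_mult[OF j] by (meson hd_in_set last_in_set subsetD)
  have "\<Phi> (snd (eval_word (ALetter (aprod X) # ps @ [ALetter (aprod Y)]))) =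
      \<phi> (aprod X * hd (fst (normal_form ps)) * (last (fst (normal_form ps)) * aprod Y)) * R"
    using Phi_eval_word[OF _ _ I] F F_word_letters_in[OF ps j] aprod_in_A0[OF _ I] X Y R(2)
    by (simp add: F_letters_append)
  also have "\<dots> = \<phi> (hd (fst (normal_form ps)) * last (fst (normal_form ps))) * \<phi> (aprod X * aprod Y) * R"
    using phi_factor_out_middle[OF X Y j D assms(5,6)] by (simp add: mult.assoc)
  also have "\<dots> = \<Phi> (snd (eval_word ps)) * \<phi> (aprod X * aprod Y)"
    using Phi_eval_word[OF F F_word_letters_in[OF ps j] I] R(1) by simp
  finally show ?thesis .
qed

text \<open>The A-entry of the normal form between the two words is \<open>c * aprod Y * c'\<close> with
  \<open>c, c' \<in> A\<^sub>j\<close>.\<close>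

lemma Phi_formula_same_index_words_zero:
  assumes Y: "alternating_centered Y" "Y \<noteq> []" "fst (hd Y) \<noteq> j" "fst (last Y) \<noteq> j"
    and ps: "F_word j ps" and q: "F_word j q" and j: "j \<in> I"
  shows "Phi_formula (normal_form (ALetter x # ps @ ALetter (aprod Y) # q @ rest)) = 0"
proof -
  let ?P\<^sub>1 = "ALetter x # ps @ [ALetter (aprod Y)]" and ?P\<^sub>2 = "q @ rest"
  have Fps: "F_letters ps \<noteq> []" and Fq: "F_letters q \<noteq> []"
    using ps q by (simp_all add: F_word_def)
  have "set (fst (normal_form ps)) \<subseteq> As j" "set (fst (normal_form q)) \<subseteq> As j"
    using set_normal_form_subset[of "As j"] ps q As_one[OF j] As_mult[OF j] by (auto simp: F_word_def)
  moreover have "fst (normal_form ps) \<noteq> []" "fst (normal_form q) \<noteq> []"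
    using length_normal_form by (metis list.size(3) nat.distinct(1))+
  ultimately have "\<phi> (last (fst (normal_form ps)) * aprod Y * hd (fst (normal_form q))) = 0"
    by (intro phi_sandwich_zero[OF Y j]) auto
  moreover have "last (fst (normal_form ?P\<^sub>1)) = last (fst (normal_form ps)) * aprod Y"
    by (simp only: normal_form_in_context[OF Fps]) simp
  moreover have "hd (fst (normal_form ?P\<^sub>2)) = hd (fst (normal_form q))"
    by (rule hd_normal_form_append[OF Fq])
  ultimately have "\<phi> (last (fst (normal_form ?P\<^sub>1)) * hd (fst (normal_form ?P\<^sub>2))) = 0"
    by (simp add: mult.assoc)
  moreover have "snd (normal_form ?P\<^sub>1) \<noteq> []" "snd (normal_form ?P\<^sub>2) \<noteq> []"
    using Fps Fq by (simp_all add: snd_normal_form F_letters_append)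
  ultimately have "Phi_formula (nf_mult (normal_form ?P\<^sub>1) (normal_form ?P\<^sub>2)) = 0"
    using Phi_formula_nf_mult_zero length_normal_form by blast
  then show ?thesis using normal_form_append[of ?P\<^sub>1 ?P\<^sub>2] by simp
qed

lemma Phi_formula_distinct_index_words_zero:
  assumes ps: "F_word j ps" and q: "F_word k q" and "j \<in> I" "k \<in> I" "j \<noteq> k"
    and rest: "list_all2 generator_word pss js"
  shows "Phi_formula (normal_form (ALetter x # ps @ ALetter y # q @ concat pss)) = 0"
proof -
  let ?wps = "(j, ps) # (k, q) # zip js pss"
  have F_letters_UNIV: "letters_in UNIV (Fs i) p" if "F_word i p" for i p
    using that letters_in_mono[OF _ subset_UNIV order_refl] unfolding F_word_def by blast
  have "\<forall>(i, p) \<in> set (zip js pss). i \<in> I \<and> letters_in UNIV (Fs i) p"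
    using rest by (induction rule: list_all2_induct)
      (auto simp: generator_word_def centered_letter_def F_letters_UNIV)
  then have "\<forall>(i, p) \<in> set ?wps. i \<in> I \<and> letters_in UNIV (Fs i) p"
    using assms(1-4) F_letters_UNIV by auto
  then have "\<Phi> (fprod (F_letters (concat (map snd ?wps)))) = 0"
    using assms(5) ps q by (intro Phi_F_letters_two_indices_zero[of ?wps j ps k q]) (auto simp: F_word_def)
  moreover have "map snd (zip js pss) = pss" using rest by (simp add: list_all2_lengthD)
  ultimately show ?thesis by (simp add: Phi_formula_def snd_normal_form F_letters_append)
qed

lemma Phi_two_words_zero:
  assumes X: "alternating_centered X" and Y: "alternating_centered Y"
    and ps: "F_word j ps" and q: "F_word k q" and j: "j \<in> I" and k: "k \<in> I"
    and alt: "successively (\<noteq>) (j # map fst Y @ [k])"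
    and rest: "list_all2 generator_word pss js"
  shows "\<Phi> (snd (eval_word (ALetter (aprod X) # ps @ ALetter (aprod Y) # q @ concat pss))) = 0"
proof -
  have I: "I \<noteq> {}" using j by blast
  have "F_letters (ALetter (aprod X) # ps @ ALetter (aprod Y) # q @ concat pss) \<noteq> []"
    using ps by (simp add: F_word_def F_letters_append)
  moreover have "letters_in A\<^sub>0 F\<^sub>0 (ALetter (aprod X) # ps @ ALetter (aprod Y) # q @ concat pss)"
    using F_word_letters_in[OF ps j] F_word_letters_in[OF q k] generator_words_letters_in[OF rest]
      aprod_in_A0[OF X I] aprod_in_A0[OF Y I] by simp
  ultimately have "\<Phi> (snd (eval_word (ALetter (aprod X) # ps @ ALetter (aprod Y) # q @ concat pss))) =
      Phi_formula (normal_form (ALetter (aprod X) # ps @ ALetter (aprod Y) # q @ concat pss))"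
    using I by (rule Phi_eval_word)
  also have "\<dots> = 0"
  proof (cases "k = j")
    case True
    have "Y \<noteq> []" using alt True by auto
    moreover have "fst (hd Y) \<noteq> j" "fst (last Y) \<noteq> j"
      using alt True \<open>Y \<noteq> []\<close> by (auto simp: successively_Cons successively_append_iff hd_map last_map)
    ultimately show ?thesis
      using Phi_formula_same_index_words_zero[OF Y _ _ _ ps q[unfolded True] j] by simp
  next
    case False
    then show ?thesis using Phi_formula_distinct_index_words_zero[OF ps q j k _ rest] by simp
  qed
  finally show ?thesis .
qed

lemma Phi_word_then_generators:
  assumes X: "alternating_centered X" and Y: "alternating_centered Y"
    and ps: "F_word j ps" and j: "j \<in> I" and "X \<noteq> [] \<Longrightarrow> fst (last X) \<noteq> j"
    and "list_all2 generator_word pss js"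
    and "successively (\<noteq>) (j # map fst Y @ js)"
  shows "\<Phi> (snd (eval_word (ALetter (aprod X) # ps @ ALetter (aprod Y) # concat pss))) =
    \<Phi> (snd (eval_word ps)) * \<phi> (aprod X * aprod Y * fst (eval_word (concat pss)))"
  using assms(6,2,7)
proof (induction arbitrary: Y rule: list_all2_induct)
  case Nil
  then have "Y \<noteq> [] \<Longrightarrow> fst (hd Y) \<noteq> j" by (cases Y) auto
  then show ?case
    using Phi_word_in_context[OF X Nil.prems(1) ps j assms(5)] by (simp add: eval_word_Nil)
next
  case (Cons q pss k js)
  have k: "k \<in> I" using Cons.hyps(1) by (simp add: generator_word_def)
  show ?case
  proof (cases "centered_letter k q")
    case True
    then obtain a where q: "q = [ALetter a]" "a \<in> As k" "\<phi> a = 0" by (auto simp: centered_letter_def)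
    have "Y \<noteq> [] \<Longrightarrow> fst (last Y) \<noteq> k"
      using Cons.prems(2) by (auto simp: successively_Cons successively_append_iff last_map)
    then have Y': "alternating_centered (Y @ [(k, a)])"
      using Cons.prems(1) q k by (auto simp: alternating_centered_append alternating_centered_Cons)
    have IH: "\<Phi> (snd (eval_word (ALetter (aprod X) # ps @ ALetter (aprod (Y @ [(k, a)])) # concat pss))) =
        \<Phi> (snd (eval_word ps)) * \<phi> (aprod X * aprod (Y @ [(k, a)]) * fst (eval_word (concat pss)))"
      using Cons.IH[OF Y'] Cons.prems(2) by simp
    have "eval_word (ALetter (aprod Y) # concat (q # pss)) =
        eval_word (ALetter (aprod (Y @ [(k, a)])) # concat pss)"
      using q by (simp add: eval_word_ALetter_ALetter)
    then show ?thesis using IH q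
      by (simp add: eval_word_append eval_word_Cons eval_word_single fst_bmul mult.assoc)
  next
    case False
    then have q: "F_word k q" using Cons.hyps(1) by (simp add: generator_word_def)
    have "\<Phi> (snd (eval_word (ALetter (aprod X) # ps @ ALetter (aprod Y) # q @ concat pss))) = 0"
    proof (rule Phi_two_words_zero[OF X Cons.prems(1) ps q j k _ Cons.hyps(2)])
      have "successively (\<noteq>) ((j # map fst Y @ [k]) @ js)" using Cons.prems(2) by simp
      then show "successively (\<noteq>) (j # map fst Y @ [k])" by (simp only: successively_append_iff)
    qed
    moreover have "fst (eval_word (concat (q # pss))) = 0"
      using q by (simp add: F_word_def fst_eval_word F_letters_append)
    ultimately show ?thesis by (simp add: phi_zero)
  qed
qed

lemma Phi_generators:
  assumes "alternating_centered X" "list_all2 generator_word pss js"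
    and "successively (\<noteq>) (map fst X @ js)"
  shows "\<Phi> (snd (eval_word (ALetter (aprod X) # concat pss))) = leibniz (aprod X) (map eval_word pss)"
  using assms(2,1,3)
proof (induction arbitrary: X rule: list_all2_induct)
  case Nil
  then show ?case by (simp add: eval_word_single Phi_zero)
next
  case (Cons ps pss j js)
  have j: "j \<in> I" using Cons.hyps(1) by (simp add: generator_word_def)
  have X_end: "X \<noteq> [] \<Longrightarrow> fst (last X) \<noteq> j"
    using Cons.prems(2) by (cases X rule: rev_cases) (auto simp: successively_append_iff)
  show ?case
  proof (cases "centered_letter j ps")
    case True
    then obtain a where ps: "ps = [ALetter a]" "a \<in> As j" "\<phi> a = 0" by (auto simp: centered_letter_def)
    have X': "alternating_centered (X @ [(j, a)])"
      using Cons.prems(1) X_end ps j by (auto simp: alternating_centered_append alternating_centered_Cons)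
    have "eval_word (ALetter (aprod X) # concat (ps # pss)) = eval_word (ALetter (aprod (X @ [(j, a)])) # concat pss)"
      using ps by (simp add: eval_word_ALetter_ALetter)
    then show ?thesis
      using Cons.IH[OF X'] Cons.prems(2) ps by (simp add: eval_word_single Phi_zero)
  next
    case False
    then have ps: "F_word j ps" using Cons.hyps(1) by (simp add: generator_word_def)
    have "eval_word (ALetter (aprod X) # concat (ps # pss)) =
        eval_word (ALetter (aprod X) # ps @ ALetter (aprod []) # concat pss)"
      by (simp add: eval_word_append eval_word_Cons bmul_one)
    moreover have "successively (\<noteq>) (j # map fst [] @ js)"
      using Cons.prems(2) by (simp add: successively_append_iff)
    moreover have "fst (eval_word ps) = 0" using ps by (simp add: F_word_def fst_eval_word)
    ultimately show ?thesis
      using Phi_word_then_generators[OF Cons.prems(1) alternating_centered_Nil ps j X_end Cons.hyps(2)]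
      by (simp add: bprod_map_eval_word leibniz_zero)
  qed
qed

section \<open>The subalgebras \<open>B\<^sub>i\<close>\<close>

definition word_span :: "'i \<Rightarrow> ('a \<times> 'f) set" where
  "word_span j = {(\<Sum>ps\<leftarrow>ws. eval_word ps) | ws. \<forall>ps\<in>set ws. F_word j ps}"

definition Bspan :: "'i \<Rightarrow> ('a \<times> 'f) set" where
  "Bspan j = {(a, 0) + t | a t. a \<in> As j \<and> t \<in> word_span j}"

lemma zero_in_word_span: "0 \<in> word_span j"
  unfolding word_span_def by (rule CollectI, rule exI[of _ "[]"]) simp

lemma word_span_add:
  assumes "s \<in> word_span j" "t \<in> word_span j"
  shows "s + t \<in> word_span j"
proof -
  obtain ws where "\<forall>ps\<in>set ws. F_word j ps" "s = (\<Sum>ps\<leftarrow>ws. eval_word ps)"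
    using assms(1) unfolding word_span_def by blast
  moreover obtain ws' where "\<forall>ps\<in>set ws'. F_word j ps" "t = (\<Sum>ps\<leftarrow>ws'. eval_word ps)"
    using assms(2) unfolding word_span_def by blast
  ultimately have "\<forall>ps\<in>set (ws @ ws'). F_word j ps" "s + t = (\<Sum>ps\<leftarrow>ws @ ws'. eval_word ps)" by auto
  then show ?thesis unfolding word_span_def by blast
qed

lemma word_span_mult_left:
  assumes "t \<in> word_span j" "a \<in> As j"
  shows "(a, 0) \<odot> t \<in> word_span j"
proof -
  obtain ws where ws: "\<forall>ps\<in>set ws. F_word j ps" "t = (\<Sum>ps\<leftarrow>ws. eval_word ps)"
    using assms(1) unfolding word_span_def by blast
  then have "(a, 0) \<odot> t = (\<Sum>ps\<leftarrow>map (Cons (ALetter a)) ws. eval_word ps)"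
    by (simp add: bmul_sum_list comp_def eval_word_Cons)
  moreover have "\<forall>ps\<in>set (map (Cons (ALetter a)) ws). F_word j ps"
    using ws assms(2) by (auto simp: F_word_def)
  ultimately show ?thesis unfolding word_span_def by blast
qed

lemma word_span_mult_right:
  assumes "t \<in> word_span j" "a \<in> As j"
  shows "t \<odot> (a, 0) \<in> word_span j"
proof -
  obtain ws where ws: "\<forall>ps\<in>set ws. F_word j ps" "t = (\<Sum>ps\<leftarrow>ws. eval_word ps)"
    using assms(1) unfolding word_span_def by blast
  then have "t \<odot> (a, 0) = (\<Sum>ps\<leftarrow>map (\<lambda>ps. ps @ [ALetter a]) ws. eval_word ps)"
    by (simp add: bmul_sum_list comp_def eval_word_append eval_word_single)
  moreover have "\<forall>ps\<in>set (map (\<lambda>ps. ps @ [ALetter a]) ws). F_word j ps"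
    using ws assms(2) by (auto simp: F_word_def F_letters_append)
  ultimately show ?thesis unfolding word_span_def by blast
qed

lemma word_span_mult:
  assumes "s \<in> word_span j" "t \<in> word_span j"
  shows "s \<odot> t \<in> word_span j"
proof -
  obtain ws where ws: "\<forall>ps\<in>set ws. F_word j ps" "s = (\<Sum>ps\<leftarrow>ws. eval_word ps)"
    using assms(1) unfolding word_span_def by blast
  obtain ws' where ws': "\<forall>ps\<in>set ws'. F_word j ps" "t = (\<Sum>ps\<leftarrow>ws'. eval_word ps)"
    using assms(2) unfolding word_span_def by blast
  define vs where "vs = concat (map (\<lambda>ps. map (\<lambda>qs. ps @ qs) ws') ws)"
  have "s \<odot> t = (\<Sum>ps\<leftarrow>ws. \<Sum>qs\<leftarrow>ws'. eval_word ps \<odot> eval_word qs)"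
    unfolding ws(2) ws'(2) bmul_sum_list(1) by (simp add: bmul_sum_list(2) comp_def)
  also have "\<dots> = (\<Sum>ps\<leftarrow>vs. eval_word ps)"
    by (simp add: vs_def comp_def eval_word_append sum_list_concat map_concat)
  finally have "s \<odot> t = (\<Sum>ps\<leftarrow>vs. eval_word ps)" .
  moreover have "\<forall>ps\<in>set vs. F_word j ps"
    using ws ws' unfolding vs_def by (auto simp: F_word_def F_letters_append)
  ultimately show ?thesis unfolding word_span_def by blast
qed

lemma word_span_bsm:
  assumes "t \<in> word_span j" "j \<in> I"
  shows "bsm smA smF c t \<in> word_span j"
proof -
  have "bsm smA smF c x = (smA c 1, 0) \<odot> x" for x
    using bsm_bmul[of c "(1, 0)" x]
    by (simp add: bsm_def bmul_one cvs_zero_vector[OF cvs_smF])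
  then show ?thesis using word_span_mult_left[OF assms(1) As_smA[OF assms(2) As_one[OF assms(2)]]] by simp
qed

lemma fst_word_span:
  assumes "t \<in> word_span j"
  shows "fst t = 0"
proof -
  obtain ws where "\<forall>ps\<in>set ws. F_word j ps" "t = (\<Sum>ps\<leftarrow>ws. eval_word ps)"
    using assms unfolding word_span_def by blast
  then show ?thesis by (induction ws arbitrary: t) (auto simp: F_word_def fst_eval_word)
qed

lemma subalgB_Bspan:
  assumes j: "j \<in> I"
  shows "subalgB smA smF lA rA (Bspan j)"
  unfolding subalgB_def
proof (intro conjI ballI allI)
  show "(0, 0) \<in> Bspan j"
    unfolding Bspan_def using zero_in_word_span As_zero[OF j] by (force simp: zero_prod_def)
next
  fix x y assume "x \<in> Bspan j" "y \<in> Bspan j"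
  then obtain a t a' t' where x: "a \<in> As j" "t \<in> word_span j" "x = (a, 0) + t"
    and y: "a' \<in> As j" "t' \<in> word_span j" "y = (a', 0) + t'"
    unfolding Bspan_def by blast
  have "badd x y = (a + a', 0) + (t + t')"
    using x y by (simp add: badd_def plus_prod_def)
  then show "badd x y \<in> Bspan j"
    unfolding Bspan_def using x y As_add[OF j] word_span_add by blast
  have "x \<odot> y = (a * a', 0) + ((a, 0) \<odot> t' + t \<odot> (a', 0) + t \<odot> t')"
    using x y by (simp add: bmul_add bmul_A_A algebra_simps)
  moreover have "(a, 0) \<odot> t' + t \<odot> (a', 0) + t \<odot> t' \<in> word_span j"
    using x y by (intro word_span_add word_span_mult_left word_span_mult_right word_span_mult)
  ultimately show "x \<odot> y \<in> Bspan j"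
    unfolding Bspan_def using As_mult[OF j x(1) y(1)] by blast
next
  fix c x assume "x \<in> Bspan j"
  then obtain a t where x: "a \<in> As j" "t \<in> word_span j" "x = (a, 0) + t"
    unfolding Bspan_def by blast
  have "bsm smA smF c x = (smA c a, 0) + bsm smA smF c t"
    unfolding x(3) bsm_add by (simp add: bsm_def cvs_zero_vector[OF cvs_smF])
  then show "bsm smA smF c x \<in> Bspan j"
    unfolding Bspan_def using As_smA[OF j x(1)] word_span_bsm[OF x(2) j] by blast
qed

lemma Bsub_subset_Bspan:
  assumes j: "j \<in> I"
  shows "Bsub smA smF lA rA (As j) (Fs j) \<subseteq> Bspan j"
proof -
  have "(a, 0) \<in> Bspan j" if "a \<in> As j" for a
  proof -
    have "(a, 0) = (a, 0) + (0 :: 'a \<times> 'f)" by simp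
    then show ?thesis unfolding Bspan_def using that zero_in_word_span[of j] by blast
  qed
  moreover have "(smA c 1, f) \<in> Bspan j" if "f \<in> Fs j" for c f
  proof -
    have "(smA c 1, f) = (smA c 1, 0) + eval_word [FLetter f]" by (simp add: eval_word_single)
    moreover have "F_word j [FLetter f]" using that by (simp add: F_word_def)
    then have "eval_word [FLetter f] \<in> word_span j"
      unfolding word_span_def by (intro CollectI exI[of _ "[[FLetter f]]"]) simp
    ultimately show ?thesis
      unfolding Bspan_def using As_smA[OF j As_one[OF j]] by blast
  qed
  ultimately show ?thesis
    unfolding Bsub_def gen_algB_def using subalgB_Bspan[OF j] by blast
qed

lemma Bsub_centered_as_generator_sum:
  assumes j: "j \<in> I" and b: "b \<in> Bsub smA smF lA rA (As j) (Fs j)" and centered: "\<phi> (fst b) = 0"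
  shows "fst b \<in> As j" and "\<exists>us. (\<forall>u\<in>set us. generator_word u j) \<and> b = (\<Sum>u\<leftarrow>us. eval_word u)"
proof -
  obtain a t where a: "a \<in> As j" and t: "t \<in> word_span j" and b_eq: "b = (a, 0) + t"
    using Bsub_subset_Bspan[OF j] b unfolding Bspan_def by blast
  obtain ws where ws: "\<forall>ps\<in>set ws. F_word j ps" "t = (\<Sum>ps\<leftarrow>ws. eval_word ps)"
    using t unfolding word_span_def by blast
  have fst_b: "fst b = a" using b_eq fst_word_span[OF t] by simp
  then show "fst b \<in> As j" using a by simp
  have "\<forall>u\<in>set ([ALetter a] # ws). generator_word u j"
    using ws(1) a centered fst_b j by (auto simp: generator_word_def centered_letter_def)
  moreover have "b = (\<Sum>u\<leftarrow>[ALetter a] # ws. eval_word u)"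
    using b_eq ws(2) by (simp add: eval_word_single)
  ultimately show "\<exists>us. (\<forall>u\<in>set us. generator_word u j) \<and> b = (\<Sum>u\<leftarrow>us. eval_word u)" by blast
qed

lemma Phi_prod_eq_leibniz:
  assumes alt: "successively (\<noteq>) (map fst bs)"
    and el: "\<forall>(j, b) \<in> set bs. j \<in> I \<and> b \<in> Bsub smA smF lA rA (As j) (Fs j) \<and> \<phi> (fst b) = 0"
  shows "\<Phi> (snd (prodB (map snd bs))) = leibniz 1 (map snd bs)"
proof (rule multiadditive_eq_on_sums[where P = generator_word and f = eval_word and ps = "map fst bs"])
  show "\<Phi> (snd (prodB (pre @ (x + y) # post))) =
      \<Phi> (snd (prodB (pre @ x # post))) + \<Phi> (snd (prodB (pre @ y # post)))" for pre x y post
    by (simp add: bprod_append bprod_Cons bmul_add Phi_add)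
  show "leibniz 1 (pre @ (x + y) # post) = leibniz 1 (pre @ x # post) + leibniz 1 (pre @ y # post)"
    for pre x y post
    by (rule leibniz_additive)
  show "\<Phi> (snd (prodB (map eval_word ws))) = leibniz 1 (map eval_word ws)"
    if "list_all2 generator_word ws (map fst bs)" for ws
  proof -
    have "prodB (map eval_word ws) = eval_word (ALetter (aprod []) # concat ws)"
      by (simp add: bprod_map_eval_word eval_word_Cons bmul_one)
    then show ?thesis using Phi_generators[OF alternating_centered_Nil that] alt by simp
  qed
  show "list_all2 (\<lambda>x j. \<exists>us. (\<forall>u\<in>set us. generator_word u j) \<and> x = (\<Sum>u\<leftarrow>us. eval_word u))
      (map snd bs) (map fst bs)"
    unfolding list.rel_map
    by (rule list.rel_refl_strong) (use el Bsub_centered_as_generator_sum(2) in fastforce)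
qed

lemma inf_free_Bsub:
  "inf_free (bmul lA rA) (1, 0) (\<lambda>b. \<phi> (fst b)) (\<lambda>b. \<Phi> (snd b)) I
     (\<lambda>i. Bsub smA smF lA rA (As i) (Fs i))"
  unfolding inf_free_def Let_def
proof (intro allI impI conjI)
  fix bs :: "('i \<times> ('a \<times> 'f)) list"
  assume ne: "bs \<noteq> []" and alt: "successively (\<noteq>) (map fst bs)"
    and el: "\<forall>(j, b) \<in> set bs. j \<in> I \<and> b \<in> Bsub smA smF lA rA (As j) (Fs j) \<and> \<phi> (fst b) = 0"
  let ?n = "length bs" and ?x = "map snd bs"
  define T where "T = map (\<lambda>(j, b). (j, fst b)) bs"
  have T: "alternating_centered T"
    using alt el Bsub_centered_as_generator_sum(1)
    by (fastforce simp: alternating_centered_def T_def comp_def case_prod_beta)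
  have fst_T: "map fst T = map fst bs" and len_T: "length T = ?n"
    and snd_T: "\<And>l. l < ?n \<Longrightarrow> snd (T ! l) = fst (?x ! l)"
    by (simp_all add: T_def comp_def case_prod_beta)
  have foldr_prodB: "foldr (bmul lA rA) ?x (1, 0) = prodB ?x" by (simp add: bprod_def)
  show "\<phi> (fst (foldr (bmul lA rA) ?x (1, 0))) = 0"
    using phi_aprod_zero[OF T] ne
    by (simp add: foldr_prodB fst_bprod T_def comp_def case_prod_beta)
  have "\<Phi> (snd (foldr (bmul lA rA) ?x (1, 0))) =
      (\<Sum>k<length T. \<Phi> (snd (?x ! k)) * \<phi> (aprod (take k T) * aprod (drop (Suc k) T)))"
    unfolding foldr_prodB Phi_prod_eq_leibniz[OF alt el] leibniz_conv_sum
    by (simp add: T_def take_map drop_map comp_def case_prod_beta)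
  also have "\<dots> = (if odd ?n \<and> rev (map fst bs) = map fst bs
      then (\<Prod>l<(?n - 1) div 2. \<phi> (fst (?x ! l \<odot> ?x ! (?n - 1 - l)))) * \<Phi> (snd (?x ! (?n div 2)))
      else 0)"
    unfolding sum_phi_omit_one[OF T] unfolding fst_T len_T
    using snd_T by (auto simp: fst_bmul intro!: prod.cong)
  finally show "\<Phi> (snd (foldr (bmul lA rA) ?x (1, 0))) = (if odd ?n \<and> rev (map fst bs) = map fst bs
      then (\<Prod>l<(?n - 1) div 2. \<phi> (fst (?x ! l \<odot> ?x ! (?n - 1 - l)))) * \<Phi> (snd (?x ! (?n div 2)))
      else 0)" .
qed

end

theorem corollary3p7:
  fixes smA :: "complex \<Rightarrow> 'a::ring_1 \<Rightarrow> 'a" and \<phi> :: "'a \<Rightarrow> complex"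
    and smF :: "complex \<Rightarrow> 'f::ring \<Rightarrow> 'f"
    and lA :: "'a \<Rightarrow> 'f \<Rightarrow> 'f" and rA :: "'f \<Rightarrow> 'a \<Rightarrow> 'f" and \<Phi> :: "'f \<Rightarrow> complex"
    and I :: "'i set" and As :: "'i \<Rightarrow> 'a set" and Fs :: "'i \<Rightarrow> 'f set"
  assumes "ncpsB' smA \<phi> smF lA rA \<Phi>"
    and "\<forall>i\<in>I. subalg smA (As i) \<and> 1 \<in> As i"
    and "\<forall>i\<in>I. subalg smF (Fs i)"
    and "Bprime_free smA \<phi> smF lA rA \<Phi> I As Fs"
  shows "inf_free (bmul lA rA) (1, 0) (\<lambda>b. \<phi> (fst b)) (\<lambda>b. \<Phi> (snd b)) I
           (\<lambda>i. Bsub smA smF lA rA (As i) (Fs i))"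
proof -
  interpret B'_free_family smA \<phi> smF lA rA \<Phi> I As Fs
    using assms by (unfold_locales; simp add: ncps_B'_def)
  show ?thesis by (rule inf_free_Bsub)
qed

end
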